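(* Let $t\in\mathbb{N}$ and $C=20t$. Suppose $H$ is a bipartite graph with parts $X$ and $Y$ such that $e(H)\ge C|Y|$ and $d_H(x)\ge C|Y|^{1/2}$ for every $x\in X$. Then $H$ contains $P_t^{\square}$ as a subgraph.
   Context: $P_t$ denotes the path with $t$ vertices. $P_t^{\square}=P_t\square K_2$ is the graph with vertices $x_0,\dots,x_{t-1},y_0,\dots,y_{t-1}$ and edges $x_iy_i$ ($0\le i\le t-1$) and $x_ix_{i+1}$, $y_iy_{i+1}$ ($0\le i\le t-2$). *)

theory Defs
  imports Complex_Main
begin

text \<open>Vertices of H are encoded in the sum type: Inl x for x in X, Inr y for y in Y.\<close>

definition bip_graph :: "'a set \<Rightarrow> 'b set \<Rightarrow> ('a \<times> 'b) set \<Rightarrow> bool" where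
  "bip_graph X Y E \<longleftrightarrow> finite X \<and> finite Y \<and> E \<subseteq> X \<times> Y"

definition num_edges :: "('a \<times> 'b) set \<Rightarrow> nat" where
  "num_edges E = card E"

definition degX :: "('a \<times> 'b) set \<Rightarrow> 'a \<Rightarrow> nat" where
  "degX E x = card {y. (x, y) \<in> E}"

definition bip_adj :: "('a \<times> 'b) set \<Rightarrow> ('a + 'b) \<Rightarrow> ('a + 'b) \<Rightarrow> bool" where
  "bip_adj E u v \<longleftrightarrow> (\<exists>x y. (x, y) \<in> E \<and> ((u = Inl x \<and> v = Inr y) \<or> (u = Inr y \<and> v = Inl x)))"

text \<open>The ladder P_t square K_2: vertex (False, i) is x_i, (True, i) is y_i, for i < t.\<close>

definition ladder_verts :: "nat \<Rightarrow> (bool \<times> nat) set" where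
  "ladder_verts t = UNIV \<times> {..<t}"

definition ladder_edge :: "nat \<Rightarrow> (bool \<times> nat) \<Rightarrow> (bool \<times> nat) \<Rightarrow> bool" where
  "ladder_edge t u v \<longleftrightarrow> u \<in> ladder_verts t \<and> v \<in> ladder_verts t \<and>
     ((snd u = snd v \<and> fst u \<noteq> fst v) \<or>
      (fst u = fst v \<and> (snd v = Suc (snd u) \<or> snd u = Suc (snd v))))"

definition contains_ladder :: "'a set \<Rightarrow> 'b set \<Rightarrow> ('a \<times> 'b) set \<Rightarrow> nat \<Rightarrow> bool" where
  "contains_ladder X Y E t \<longleftrightarrow> (\<exists>f. inj_on f (ladder_verts t) \<and>
      f ` ladder_verts t \<subseteq> Inl ` X \<union> Inr ` Y \<and>
      (\<forall>u v. ladder_edge t u v \<longrightarrow> bip_adj E (f u) (f v)))"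

end

theory Submission
  imports Defs "HOL-Analysis.Convex"
begin

text \<open>Consider the hypergraph whose vertices are the edges of \<open>H\<close> and the ordered pairs of
  vertices in \<open>X\<close>, with a hyperedge \<open>{xw, x'w, (x, x')}\<close> for every cherry \<open>x - w - x'\<close>
  with \<open>w \<in> Y\<close>. By Cauchy-Schwarz it has at least \<open>e(H)\<^sup>2 / |Y|\<close> hyperedges, which the two
  hypotheses make more than \<open>2t - 1\<close> times its number of vertices; hence it contains a nonempty
  subhypergraph of minimum degree \<open>2t\<close>. Inside this core the ladder grows greedily: a cherry
  through the last rung \<open>xw\<close> yields a fresh \<open>x'\<close> adjacent to \<open>w\<close>, and a cherry through the pair
  \<open>(x, x')\<close> yields a fresh \<open>w'\<close> adjacent to both, with \<open>x'w'\<close> again a vertex of the core.\<close>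

definition induced_edges :: "'r set \<Rightarrow> ('r \<Rightarrow> 'v set) \<Rightarrow> 'v set \<Rightarrow> 'r set" where
  "induced_edges R nd W = {r \<in> R. nd r \<subseteq> W}"

definition hdegree :: "'r set \<Rightarrow> ('r \<Rightarrow> 'v set) \<Rightarrow> 'v set \<Rightarrow> 'v \<Rightarrow> nat" where
  "hdegree R nd W v = card {r \<in> induced_edges R nd W. v \<in> nd r}"

lemma card_induced_edges_remove:
  assumes "finite R" "v \<in> W"
  shows "card (induced_edges R nd (W - {v})) = card (induced_edges R nd W) - hdegree R nd W v"
proof -
  have "induced_edges R nd (W - {v}) = induced_edges R nd W - {r \<in> induced_edges R nd W. v \<in> nd r}"
    unfolding induced_edges_def by auto
  moreover have "finite (induced_edges R nd W)"
    using assms(1) unfolding induced_edges_def by simp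
  ultimately show ?thesis
    unfolding hdegree_def by (simp add: card_Diff_subset)
qed

lemma exists_min_degree_subhypergraph:
  fixes nd :: "'r \<Rightarrow> 'v set"
  assumes "finite V" "\<forall>r\<in>R. nd r \<subseteq> V" "(k - 1) * card V < card R"
  shows "\<exists>W\<subseteq>V. induced_edges R nd W \<noteq> {} \<and> (\<forall>v\<in>W. k \<le> hdegree R nd W v)"
proof -
  have "finite R" using assms(3) by (intro card_ge_0_finite) linarith
  \<comment> \<open>A smallest dense \<open>W\<close> has minimum degree \<open>k\<close>: deleting a vertex of smaller degree keeps it dense.\<close>
  let ?dense = "\<lambda>W. W \<subseteq> V \<and> (k - 1) * card W < card (induced_edges R nd W)"
  have "induced_edges R nd V = R"
    using assms(2) unfolding induced_edges_def by auto
  with assms(3) have "?dense V" by simp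
  then obtain W where W: "?dense W" and least: "\<And>W'. ?dense W' \<Longrightarrow> card W \<le> card W'"
    using ex_has_least_nat[of ?dense V card] by blast
  have "k \<le> hdegree R nd W v" if v: "v \<in> W" for v
  proof (rule ccontr)
    assume "\<not> k \<le> hdegree R nd W v"
    then have deg: "hdegree R nd W v \<le> k - 1" by simp
    have fW: "finite W" using W assms(1) finite_subset by blast
    then obtain c where c: "card W = Suc c" using v by (metis card_Suc_Diff1)
    have "hdegree R nd W v \<le> card (induced_edges R nd W)"
      unfolding hdegree_def induced_edges_def by (rule card_mono) (use \<open>finite R\<close> in auto)
    moreover have "(k - 1) * card W = (k - 1) * c + (k - 1)" using c by simp
    ultimately have "?dense (W - {v})"
      using W deg c v fW by (auto simp: card_induced_edges_remove[OF \<open>finite R\<close> v])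
    with least have "card W \<le> card (W - {v})" .
    with c v show False by simp
  qed
  moreover have "induced_edges R nd W \<noteq> {}" using W by auto
  ultimately show ?thesis using W by blast
qed

text \<open>A cherry \<open>(w, x, x')\<close> is the path \<open>x - w - x'\<close>; \<open>x = x'\<close> is allowed.\<close>

definition cherries :: "('a \<times> 'b) set \<Rightarrow> ('b \<times> 'a \<times> 'a) set" where
  "cherries E = {(w, x, x'). (x, w) \<in> E \<and> (x', w) \<in> E}"

fun cherry_verts :: "'b \<times> 'a \<times> 'a \<Rightarrow> ('a \<times> 'b + 'a \<times> 'a) set" where
  "cherry_verts (w, x, x') = {Inl (x, w), Inl (x', w), Inr (x, x')}"

lemma exists_not_in_if_card_less:
  assumes "finite B" "card B < card D"
  shows "\<exists>d\<in>D. d \<notin> B"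
  using assms card_mono leD by blast

lemma cherry_at_edge_vertex:
  assumes "finite U" "2 * card U < hdegree (cherries E) cherry_verts W (Inl (a, w))"
  shows "\<exists>x x' a'. Inr (x, x') \<in> W \<and> {x, x'} = {a, a'} \<and> a' \<notin> U \<and> (a', w) \<in> E"
proof -
  let ?bad = "(\<lambda>x. (w, a, x)) ` U \<union> (\<lambda>x. (w, x, a)) ` U"
  have "card ?bad \<le> card U + card U"
    using card_Un_le[of "(\<lambda>x. (w, a, x)) ` U"] card_image_le[OF assms(1)] by (meson add_mono le_trans)
  with assms have "\<exists>c\<in>{c \<in> induced_edges (cherries E) cherry_verts W. Inl (a, w) \<in> cherry_verts c}. c \<notin> ?bad"
    unfolding hdegree_def by (intro exists_not_in_if_card_less) auto
  then obtain x x' where "Inr (x, x') \<in> W" "(x, w) \<in> E" "(x', w) \<in> E"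
      "(x = a \<and> x' \<notin> U) \<or> (x' = a \<and> x \<notin> U)"
    unfolding induced_edges_def cherries_def by auto
  then show ?thesis by (metis insert_commute)
qed

lemma cherry_at_pair_vertex:
  assumes "finite B" "card B < hdegree (cherries E) cherry_verts W (Inr (x, x'))"
  shows "\<exists>w'. w' \<notin> B \<and> (x, w') \<in> E \<and> (x', w') \<in> E \<and> Inl (x, w') \<in> W \<and> Inl (x', w') \<in> W"
proof -
  let ?bad = "(\<lambda>w'. (w', x, x')) ` B"
  have "card ?bad \<le> card B" using assms(1) by (rule card_image_le)
  with assms have "\<exists>c\<in>{c \<in> induced_edges (cherries E) cherry_verts W. Inr (x, x') \<in> cherry_verts c}. c \<notin> ?bad"
    unfolding hdegree_def by (intro exists_not_in_if_card_less) auto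
  then show ?thesis
    unfolding induced_edges_def cherries_def by auto
qed

text \<open>Rungs \<open>u i - w i\<close> joined crosswise; the ladder vertex \<open>x\<^sub>i\<close> is \<open>u i\<close> for even \<open>i\<close> and
  \<open>w i\<close> for odd \<open>i\<close>.\<close>

definition ladder_seq :: "('a \<times> 'b) set \<Rightarrow> nat \<Rightarrow> (nat \<Rightarrow> 'a) \<Rightarrow> (nat \<Rightarrow> 'b) \<Rightarrow> bool" where
  "ladder_seq E m u w \<longleftrightarrow> inj_on u {..<m} \<and> inj_on w {..<m} \<and> (\<forall>i<m. (u i, w i) \<in> E) \<and>
     (\<forall>i. Suc i < m \<longrightarrow> (u i, w (Suc i)) \<in> E \<and> (u (Suc i), w i) \<in> E)"

lemma ladder_seq_snoc:
  assumes "ladder_seq E (Suc m) u w" "a \<notin> u ` {..m}" "b \<notin> w ` {..m}"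
    "(a, b) \<in> E" "(a, w m) \<in> E" "(u m, b) \<in> E"
  shows "ladder_seq E (Suc (Suc m)) (u(Suc m := a)) (w(Suc m := b))"
proof -
  have "{..<Suc (Suc m)} = insert (Suc m) {..m}" by auto
  with assms show ?thesis
    unfolding ladder_seq_def lessThan_Suc_atMost by (auto simp: inj_on_def less_Suc_eq)
qed

lemma contains_ladder_if_ladder_seq:
  assumes "E \<subseteq> X \<times> Y" "ladder_seq E t u w"
  shows "contains_ladder X Y E t"
proof -
  define f where "f p = (if fst p = odd (snd p) then Inl (u (snd p)) else Inr (w (snd p)))"
    for p :: "bool \<times> nat"
  have "inj_on f (ladder_verts t)"
    using assms(2) unfolding ladder_seq_def ladder_verts_def f_def
    by (auto simp: inj_on_def split: if_splits)
  moreover have "f ` ladder_verts t \<subseteq> Inl ` X \<union> Inr ` Y"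
    using assms unfolding ladder_seq_def ladder_verts_def f_def by auto
  moreover have "bip_adj E (f p) (f q)" if "ladder_edge t p q" for p q
    using assms(2) that unfolding ladder_seq_def ladder_edge_def ladder_verts_def f_def bip_adj_def
    by (cases p; cases q) auto
  ultimately show ?thesis
    unfolding contains_ladder_def by blast
qed

lemma ladder_seq_in_core:
  assumes edges: "Inl -` W \<subseteq> E" and start: "induced_edges (cherries E) cherry_verts W \<noteq> {}"
    and deg: "\<forall>v\<in>W. 2 * t \<le> hdegree (cherries E) cherry_verts W v" and "Suc m \<le> t"
  shows "\<exists>u w. ladder_seq E (Suc m) u w \<and> Inl (u m, w m) \<in> W"
  using \<open>Suc m \<le> t\<close>
proof (induction m)
  case 0
  from start obtain c where "c \<in> cherries E" "cherry_verts c \<subseteq> W"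
    unfolding induced_edges_def by auto
  then obtain a w where "Inl (a, w) \<in> W" by (cases c) auto
  with edges have "ladder_seq E (Suc 0) (\<lambda>_. a) (\<lambda>_. w) \<and> Inl (a, w) \<in> W"
    unfolding ladder_seq_def lessThan_Suc by auto
  then show ?case by blast
next
  case (Suc m)
  then obtain u w where seq: "ladder_seq E (Suc m) u w" and last: "Inl (u m, w m) \<in> W" by auto
  have small: "card (u ` {..m}) < t" "card (w ` {..m}) < t"
    using card_image_le[of "{..m}" u] card_image_le[of "{..m}" w] Suc.prems by simp_all
  obtain x x' a' where pair: "Inr (x, x') \<in> W" "{x, x'} = {u m, a'}" and
    a': "a' \<notin> u ` {..m}" "(a', w m) \<in> E"
    using cherry_at_edge_vertex[of "u ` {..m}" E W "u m" "w m"] small(1) deg last by fastforce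
  obtain b where b: "b \<notin> w ` {..m}" "(x, b) \<in> E" "(x', b) \<in> E" "Inl (x, b) \<in> W" "Inl (x', b) \<in> W"
    using cherry_at_pair_vertex[of "w ` {..m}" E W x x'] small(2) deg pair(1) by fastforce
  have "(u m, b) \<in> E" "Inl (a', b) \<in> W"
    using pair(2) b by (auto simp: doubleton_eq_iff)
  with a' b(1) edges have "ladder_seq E (Suc (Suc m)) (u(Suc m := a')) (w(Suc m := b))"
    by (intro ladder_seq_snoc[OF seq]) auto
  with \<open>Inl (a', b) \<in> W\<close> show ?case by fastforce
qed

definition degY :: "('a \<times> 'b) set \<Rightarrow> 'b \<Rightarrow> nat" where
  "degY E w = card {x. (x, w) \<in> E}"

lemma card_edges_eq_sum_degX:
  assumes "bip_graph X Y E"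
  shows "card E = (\<Sum>x\<in>X. degX E x)"
proof -
  have fin: "finite X" "\<forall>x\<in>X. finite {y. (x, y) \<in> E}" and E: "E = Sigma X (\<lambda>x. {y. (x, y) \<in> E})"
    using assms unfolding bip_graph_def by (auto intro: finite_subset[of _ Y])
  have "card E = card (Sigma X (\<lambda>x. {y. (x, y) \<in> E}))"
    using arg_cong[OF E] .
  with fin show ?thesis
    unfolding degX_def by simp
qed

lemma card_edges_eq_sum_degY:
  assumes "bip_graph X Y E"
  shows "card E = (\<Sum>w\<in>Y. degY E w)"
proof -
  have fin: "finite Y" "\<forall>w\<in>Y. finite {x. (x, w) \<in> E}"
    and E: "E = (\<lambda>(w, x). (x, w)) ` Sigma Y (\<lambda>w. {x. (x, w) \<in> E})"
    using assms unfolding bip_graph_def by (auto intro: finite_subset[of _ X])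
  have "card E = card (Sigma Y (\<lambda>w. {x. (x, w) \<in> E}))"
    by (subst E, rule card_image) (auto simp: inj_on_def)
  with fin show ?thesis
    unfolding degY_def by simp
qed

lemma card_cherries:
  assumes "bip_graph X Y E"
  shows "card (cherries E) = (\<Sum>w\<in>Y. degY E w ^ 2)"
proof -
  have fin: "finite Y" "\<forall>w\<in>Y. finite {x. (x, w) \<in> E}"
    and "cherries E = Sigma Y (\<lambda>w. {x. (x, w) \<in> E} \<times> {x. (x, w) \<in> E})"
    using assms unfolding bip_graph_def cherries_def by (auto intro: finite_subset[of _ X])
  then show ?thesis
    unfolding degY_def by (simp add: card_cartesian_product power2_eq_square)
qed

lemma ladder_density_arith:
  fixes e n x t :: real
  assumes t: "t \<ge> 1" and n: "n \<ge> 1" and "x \<ge> 0" and e: "20 * t * n \<le> e"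
    and x: "x * (20 * t * sqrt n) \<le> e"
  shows "(2 * t - 1) * (e + x^2) < e^2 / n"
proof -
  have "t \<le> t * n" using mult_left_mono[OF n, of t] t by simp
  with t e have "e > 0" by linarith
  have "(2 * t - 1) * (e * n) < (2 * t) * (e * n)"
    using \<open>e > 0\<close> n by (intro mult_strict_right_mono) auto
  also have "\<dots> = e * (20 * t * n) / 10" by simp
  also have "\<dots> \<le> e * e / 10"
    using \<open>e > 0\<close> e by (simp add: mult_left_mono mult.commute mult.left_commute)
  finally have edges: "(2 * t - 1) * e * n < e^2 / 10"
    by (simp add: power2_eq_square mult.assoc)
  have "(x * (20 * t * sqrt n))^2 \<le> e^2"
    using x \<open>x \<ge> 0\<close> t n by (intro power_mono) auto
  then have "400 * t^2 * (x^2 * n) \<le> e^2"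
    using n by (simp add: power_mult_distrib algebra_simps)
  moreover have "2 * t - 1 \<le> 4 * t^2"
    using mult_left_mono[OF t, of t] t unfolding power2_eq_square by linarith
  then have "(2 * t - 1) * (x^2 * n) \<le> 4 * t^2 * (x^2 * n)"
    using n by (intro mult_right_mono) auto
  ultimately have pairs: "(2 * t - 1) * x^2 * n \<le> e^2 / 100"
    by (simp add: mult.assoc)
  have "(2 * t - 1) * (e + x^2) * n = (2 * t - 1) * e * n + (2 * t - 1) * x^2 * n"
    by (simp add: algebra_simps)
  also have "\<dots> < e^2 / 10 + e^2 / 100"
    using edges pairs by linarith
  also have "\<dots> < e^2"
    using \<open>e > 0\<close> by simp
  finally have "(2 * t - 1) * (e + x^2) * n < e^2" .
  then show ?thesis
    using n by (simp add: pos_less_divide_eq)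
qed

lemma many_cherries:
  assumes G: "bip_graph X Y E" and "Y \<noteq> {}" and t: "t \<ge> 1"
    and edges: "20 * real t * real (card Y) \<le> real (card E)"
    and deg: "\<forall>x\<in>X. 20 * real t * sqrt (real (card Y)) \<le> real (degX E x)"
  shows "(2 * t - 1) * card (E <+> X \<times> X) < card (cherries E)"
proof -
  have fin: "finite X" "finite Y" "finite E"
    using G unfolding bip_graph_def by (auto intro: finite_subset)
  have n: "real (card Y) \<ge> 1"
    using fin(2) \<open>Y \<noteq> {}\<close> by (simp add: Suc_leI card_gt_0_iff)
  have "(real (card E))^2 \<le> real (card (cherries E)) * real (card Y)"
    using sum_squared_le_sum_of_squares[of "\<lambda>w. real (degY E w)" Y]
    by (simp add: card_edges_eq_sum_degY[OF G] card_cherries[OF G])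
  with n have cherries: "(real (card E))^2 / real (card Y) \<le> real (card (cherries E))"
    by (simp add: pos_divide_le_eq)
  have "real (card X) * (20 * real t * sqrt (real (card Y))) \<le> (\<Sum>x\<in>X. real (degX E x))"
    using deg by (intro sum_bounded_below) auto
  then have X: "real (card X) * (20 * real t * sqrt (real (card Y))) \<le> real (card E)"
    by (simp add: card_edges_eq_sum_degX[OF G])
  have "real (2 * t - 1) * real (card (E <+> X \<times> X)) = (2 * real t - 1) * (real (card E) + (real (card X))^2)"
    using t fin by (simp add: card_Plus card_cartesian_product of_nat_diff power2_eq_square)
  also have "\<dots> < (real (card E))^2 / real (card Y)"
    using t n edges X by (intro ladder_density_arith) auto
  finally show ?thesis
    using cherries by (simp flip: of_nat_mult)
qed

theorem lemma2p6:
  fixes t :: nat and X :: "'a set" and Y :: "'b set" and E :: "('a \<times> 'b) set"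
  assumes "bip_graph X Y E"
    and "Y \<noteq> {}"
    and "real (num_edges E) \<ge> 20 * real t * real (card Y)"
    and "\<forall>x\<in>X. real (degX E x) \<ge> 20 * real t * sqrt (real (card Y))"
  shows "contains_ladder X Y E t"
proof -
  have fin: "finite X" "finite E" "E \<subseteq> X \<times> Y"
    using assms(1) unfolding bip_graph_def by (auto intro: finite_subset)
  show ?thesis
  proof (cases t)
    case 0
    then have "ladder_seq E t (\<lambda>_. undefined) (\<lambda>_. undefined)"
      by (simp add: ladder_seq_def)
    with fin(3) show ?thesis
      by (rule contains_ladder_if_ladder_seq)
  next
    case (Suc m)
    let ?V = "E <+> X \<times> X"
    have "(2 * t - 1) * card ?V < card (cherries E)"
      using assms Suc unfolding num_edges_def by (intro many_cherries) auto
    moreover have "\<forall>c\<in>cherries E. cherry_verts c \<subseteq> ?V"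
      using fin(3) unfolding cherries_def by auto
    ultimately obtain W where "W \<subseteq> ?V" "induced_edges (cherries E) cherry_verts W \<noteq> {}"
      "\<forall>v\<in>W. 2 * t \<le> hdegree (cherries E) cherry_verts W v"
      using exists_min_degree_subhypergraph[of ?V "cherries E" cherry_verts "2 * t"] fin by auto
    then obtain u w where "ladder_seq E t u w"
      using ladder_seq_in_core[of W E t m] Suc by auto
    with fin(3) show ?thesis
      by (rule contains_ladder_if_ladder_seq)
  qed
qed

end
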